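(* Let $\gamma=\begin{pmatrix}a&b\\c&d\end{pmatrix}\in\mathrm{PSL}(2,\mathbb{Z})$, $n=\mathcal{R}(\gamma;z_q)$, let $x_\gamma,y_\gamma$ be as in the context, and define the integers \[ r=a+d,\quad u=b-|z_q|^2c-2\mu d,\quad s=a-d-2\mu c,\quad t=b+|z_q|^2c. \] Then $N(u+rz_q)=n+2\lambda^2$, $N(t+sz_q)=n-2\lambda^2$, and \[ y_\gamma+ix_\gamma=(u+rz_q)(t+s\overline{z_q}). \] Moreover, for every $n\in\mathcal{N}_{z_q}$, the set $L_n=\{(x_\gamma,y_\gamma):\gamma\in\Gamma_{z_q,n}\}$ satisfies \[ |L_n|=\frac{2c_n}{|\mathcal{O}_K^\times|}\,r_K(n+2\lambda^2)\,r_K(n-2\lambda^2), \] with $c_n=1/2$ if ($q$ even and $2\mid n$) or ($q$ odd and $q\mid 2n$), and $c_n=1/4$ otherwise.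
   Context: Let $q\in\{3,4,7,8,11,19,43,67,163\}$, $K$ the imaginary quadratic field of discriminant $-q$ (class number one), with ring of integers $\mathcal{O}_K$, unit group $\mathcal{O}_K^\times$, norm $N$; $r_K(M)$ is the number of elements of $\mathcal{O}_K$ of norm $M$ ($r_K(0)=1$). Let $z_q=\mu+i\lambda$ with $\mu=0$ if $q\in\{4,8\}$, $\mu=1/2$ otherwise, $\lambda=\sqrt q/2$. $\mathbb{H}$ is the upper half-plane with hyperbolic distance $\rho$, $\cosh\rho(z,w)=1+\frac{|z-w|^2}{2\,\mathrm{Im}(z)\mathrm{Im}(w)}$; $\Gamma=\mathrm{PSL}(2,\mathbb{Z})$. For $\gamma\in\Gamma$, $\mathcal{R}(\gamma;z_q)=2\lambda^2\cosh\rho(z_q,\gamma z_q)$, $\mathcal{N}_{z_q}=\{\mathcal{R}(\gamma;z_q):\gamma\in\Gamma\}$, $\Gamma_{z_q,n}=\{\gamma:\mathcal{R}(\gamma;z_q)=n\}$. For $\gamma=\begin{pmatrix}a&b\\c&d\end{pmatrix}$ with $n=\mathcal{R}(\gamma;z_q)$: $x_\gamma=2\lambda((\mu a+b)(\mu c+d)+\lambda^2ac-\mu((\mu c+d)^2+\lambda^2c^2))$ and $y_\gamma=n-2\lambda^2((\mu c+d)^2+\lambda^2c^2)$ (these do not depend on the sign of the matrix representing $\gamma$). *)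

theory Defs
  imports "HOL-Analysis.Analysis"
begin

definition mu :: "nat \<Rightarrow> real" where
  "mu q = (if q \<in> {4, 8} then 0 else 1/2)"

definition lam :: "nat \<Rightarrow> real" where
  "lam q = sqrt (real q) / 2"

definition zq :: "nat \<Rightarrow> complex" where
  "zq q = Complex (mu q) (lam q)"

definition OK :: "nat \<Rightarrow> complex set" where
  "OK q = {of_int u + of_int r * zq q | u r :: int. True}"

definition normK :: "complex \<Rightarrow> real" where
  "normK w = (cmod w)^2"

definition rK :: "nat \<Rightarrow> real \<Rightarrow> nat" where
  "rK q M = card {w \<in> OK q. normK w = M}"

definition unitsK :: "nat \<Rightarrow> complex set" where
  "unitsK q = {w \<in> OK q. \<exists>v \<in> OK q. w * v = 1}"

definition moeb :: "int \<Rightarrow> int \<Rightarrow> int \<Rightarrow> int \<Rightarrow> complex \<Rightarrow> complex" where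
  "moeb a b c d z = (of_int a * z + of_int b) / (of_int c * z + of_int d)"

definition hdist :: "complex \<Rightarrow> complex \<Rightarrow> real" where
  "hdist z w = arcosh (1 + (cmod (z - w))^2 / (2 * Im z * Im w))"

definition Rg :: "nat \<Rightarrow> int \<Rightarrow> int \<Rightarrow> int \<Rightarrow> int \<Rightarrow> real" where
  "Rg q a b c d = 2 * (lam q)^2 * cosh (hdist (zq q) (moeb a b c d (zq q)))"

definition xg :: "nat \<Rightarrow> int \<Rightarrow> int \<Rightarrow> int \<Rightarrow> int \<Rightarrow> real" where
  "xg q a b c d = 2 * lam q * ((mu q * a + b) * (mu q * c + d) + (lam q)^2 * a * c
      - mu q * ((mu q * c + d)^2 + (lam q)^2 * c^2))"

definition yg :: "nat \<Rightarrow> int \<Rightarrow> int \<Rightarrow> int \<Rightarrow> int \<Rightarrow> real" where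
  "yg q a b c d = Rg q a b c d - 2 * (lam q)^2 * ((mu q * c + d)^2 + (lam q)^2 * c^2)"

text \<open>N_{z_q}: values of R over Gamma = PSL(2,Z); elements of PSL(2,Z) are represented by
  SL(2,Z) matrices (R, x, y do not depend on the sign of the representative).\<close>
definition Nset :: "nat \<Rightarrow> real set" where
  "Nset q = {Rg q a b c d | a b c d. a * d - b * c = 1}"

definition Lset :: "nat \<Rightarrow> real \<Rightarrow> (real \<times> real) set" where
  "Lset q n = {(xg q a b c d, yg q a b c d) | a b c d. a * d - b * c = 1 \<and> Rg q a b c d = n}"

definition cn :: "nat \<Rightarrow> real \<Rightarrow> real" where
  "cn q n = (if (even q \<and> n / 2 \<in> \<int>) \<or> (odd q \<and> 2 * n / real q \<in> \<int>) then 1/2 else 1/4)"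

end

theory Submission
  imports Defs "HOL-Computational_Algebra.Primes"
begin

text \<open>Write \<open>p = a z\<^sub>q + b\<close> and \<open>m = c z\<^sub>q + d\<close>, so that \<open>\<gamma> z\<^sub>q = p / m\<close>. The integers
  \<open>\<alpha> = u + r z\<^sub>q\<close> and \<open>\<beta> = t + s z\<^sub>q\<close> are \<open>p - cnj z\<^sub>q m\<close> and \<open>p - z\<^sub>q m\<close>; hence
  \<open>\<alpha> - \<beta> = (z\<^sub>q - cnj z\<^sub>q) m\<close>, \<open>N \<alpha> - N \<beta> = q (ad - bc)\<close>, \<open>R(\<gamma>; z\<^sub>q) = 2\<lambda>\<^sup>2 + N \<beta>\<close> and
  \<open>y\<^sub>\<gamma> + i x\<^sub>\<gamma> = \<alpha> cnj \<beta>\<close>.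
  Conversely, a pair \<open>(\<alpha>, \<beta>)\<close> of integers with \<open>\<alpha> \<equiv> \<beta>\<close> modulo \<open>z\<^sub>q - cnj z\<^sub>q = \<surd>-q\<close> comes from
  the matrix read off from \<open>m = (\<alpha> - \<beta>) / \<surd>-q\<close> and \<open>p = \<alpha> + cnj z\<^sub>q m\<close>, and norms differing by
  \<open>q\<close> force its determinant to be \<open>1\<close>. Two such pairs have the same product \<open>\<alpha> cnj \<beta>\<close> exactly
  when they differ by a common unit, so \<open>|O\<^sub>K\<^sup>\<times>| |L\<^sub>n|\<close> is the number of congruent pairs with
  \<open>N \<alpha> = n + 2\<lambda>\<^sup>2\<close> and \<open>N \<beta> = n - 2\<lambda>\<^sup>2\<close>. Finally, computing with the norm form modulo
  \<open>q\<close>, \<open>8\<close> or \<open>16\<close>, either all pairs with these norms are congruent, or multiplying \<open>\<beta>\<close> by the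
  unit \<open>-1\<close> (by \<open>i\<close> when \<open>q = 4\<close>) exchanges congruent and non-congruent pairs; this is the
  factor \<open>2 c\<^sub>n\<close>.\<close>

abbreviation class_number_one :: "nat set" where
  "class_number_one \<equiv> {3, 4, 7, 8, 11, 19, 43, 67, 163}"

definition tr_zq :: "nat \<Rightarrow> int" where
  "tr_zq q = (if q \<in> {4, 8} then 0 else 1)"

definition nm_zq :: "nat \<Rightarrow> int" where
  "nm_zq q = (int q + tr_zq q) div 4"

lemma lam_pos_iff: "lam q > 0 \<longleftrightarrow> q > 0"
  by (simp add: lam_def)

lemma lam_squared: "(lam q)^2 = real q / 4"
  by (simp add: lam_def power_divide)

lemma of_int_tr_zq: "of_int (tr_zq q) = 2 * mu q"
  by (simp add: mu_def tr_zq_def)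

lemma four_nm_zq: "q \<in> class_number_one \<Longrightarrow> 4 * nm_zq q = int q + tr_zq q"
  by (auto simp: nm_zq_def tr_zq_def)

lemma of_int_nm_zq: "q \<in> class_number_one \<Longrightarrow> of_int (nm_zq q) = (mu q)^2 + (lam q)^2"
  unfolding nm_zq_def tr_zq_def mu_def lam_squared by (auto simp: power_divide)

lemma cmod_zq_squared: "q \<in> class_number_one \<Longrightarrow> (cmod (zq q))^2 = of_int (nm_zq q)"
  by (simp add: of_int_nm_zq zq_def cmod_def)

lemma zq_squared: "q \<in> class_number_one \<Longrightarrow> zq q * zq q = of_int (tr_zq q) * zq q - of_int (nm_zq q)"
  by (simp add: complex_eq_iff zq_def of_int_tr_zq of_int_nm_zq power2_eq_square)

lemma cnj_zq: "cnj (zq q) = of_int (tr_zq q) - zq q"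
  by (simp add: complex_eq_iff zq_def of_int_tr_zq)

text \<open>\<open>i \<surd>q\<close>, a square root of the discriminant \<open>-q\<close>.\<close>

definition disc_root :: "nat \<Rightarrow> complex" where
  "disc_root q = zq q - cnj (zq q)"

lemma disc_root_neq_0: "q > 0 \<Longrightarrow> disc_root q \<noteq> 0"
  using lam_pos_iff[of q] by (auto simp: disc_root_def zq_def complex_eq_iff)

lemma card_eq_mult_card_image:
  assumes "finite P" and "\<And>x. x \<in> P \<Longrightarrow> card {y \<in> P. f y = f x} = k"
  shows "card P = k * card (f ` P)"
proof -
  have "card P = card (\<Union>v \<in> f ` P. {y \<in> P. f y = v})"
    by (rule arg_cong[of _ _ card]) auto
  also have "\<dots> = (\<Sum>v \<in> f ` P. card {y \<in> P. f y = v})"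
    by (rule card_UN_disjoint) (use assms(1) in auto)
  also have "\<dots> = (\<Sum>v \<in> f ` P. k)"
    by (rule sum.cong) (use assms(2) in auto)
  finally show ?thesis
    by simp
qed

lemma two_card_filter_eq_card:
  assumes "finite S" and \<sigma>: "bij_betw \<sigma> S S" and swap: "\<And>x. x \<in> S \<Longrightarrow> P (\<sigma> x) \<longleftrightarrow> \<not> P x"
  shows "2 * card {x \<in> S. P x} = card S"
proof -
  have "\<sigma> ` {x \<in> S. \<not> P x} = {x \<in> S. P x}"
  proof
    show "\<sigma> ` {x \<in> S. \<not> P x} \<subseteq> {x \<in> S. P x}"
      using \<sigma> swap by (auto simp: bij_betw_def)
    show "{x \<in> S. P x} \<subseteq> \<sigma> ` {x \<in> S. \<not> P x}"
    proof
      fix y assume y: "y \<in> {x \<in> S. P x}"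
      then obtain x where "x \<in> S" "y = \<sigma> x"
        using \<sigma> by (auto simp: bij_betw_def)
      with y swap show "y \<in> \<sigma> ` {x \<in> S. \<not> P x}"
        by auto
    qed
  qed
  moreover have "inj_on \<sigma> {x \<in> S. \<not> P x}"
    using \<sigma> by (auto simp: bij_betw_def intro: inj_on_subset)
  ultimately have "card {x \<in> S. P x} = card {x \<in> S. \<not> P x}"
    by (metis card_image)
  moreover have "card S = card {x \<in> S. P x} + card {x \<in> S. \<not> P x}"
    using \<open>finite S\<close> by (subst card_Un_disjoint[symmetric]) (auto intro: arg_cong[of _ _ card])
  ultimately show ?thesis
    by simp
qed

section \<open>The ring of integers\<close>

lemma in_OK_iff: "w \<in> OK q \<longleftrightarrow> (\<exists>u r. w = of_int u + of_int r * zq q)"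
  by (auto simp: OK_def)

lemma OK_of_coords: "of_int u + of_int r * zq q \<in> OK q"
  by (auto simp: OK_def)

lemma OK_of_int: "of_int k \<in> OK q"
  using OK_of_coords[of k 0 q] by simp

lemma OK_zq: "zq q \<in> OK q"
  using OK_of_coords[of 0 1 q] by simp

lemma OK_add:
  assumes "x \<in> OK q" and "y \<in> OK q"
  shows "x + y \<in> OK q"
proof -
  obtain u r u' r' where "x = of_int u + of_int r * zq q" "y = of_int u' + of_int r' * zq q"
    using assms by (auto simp: in_OK_iff)
  then have "x + y = of_int (u + u') + of_int (r + r') * zq q"
    by (simp add: algebra_simps)
  then show ?thesis
    by (simp only: OK_of_coords)
qed

lemma OK_uminus:
  assumes "x \<in> OK q"
  shows "- x \<in> OK q"
proof -
  obtain u r where "x = of_int u + of_int r * zq q"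
    using assms by (auto simp: in_OK_iff)
  then have "- x = of_int (- u) + of_int (- r) * zq q"
    by (simp add: algebra_simps)
  then show ?thesis
    by (simp only: OK_of_coords)
qed

lemma OK_diff: "x \<in> OK q \<Longrightarrow> y \<in> OK q \<Longrightarrow> x - y \<in> OK q"
  using OK_add[of x q "- y"] OK_uminus[of y q] by simp

lemma OK_mult:
  assumes "q \<in> class_number_one" and "x \<in> OK q" and "y \<in> OK q"
  shows "x * y \<in> OK q"
proof -
  obtain u r u' r' where xy: "x = of_int u + of_int r * zq q" "y = of_int u' + of_int r' * zq q"
    using assms(2,3) by (auto simp: in_OK_iff)
  have "x * y = of_int (u * u') + of_int (u * r' + r * u') * zq q + of_int (r * r') * (zq q * zq q)"
    unfolding xy by (simp add: algebra_simps)
  also have "\<dots> = of_int (u * u' - r * r' * nm_zq q) + of_int (u * r' + r * u' + r * r' * tr_zq q) * zq q"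
    unfolding zq_squared[OF assms(1)] by (simp add: algebra_simps)
  finally show ?thesis
    by (simp only: OK_of_coords)
qed

lemma OK_cnj:
  assumes "x \<in> OK q"
  shows "cnj x \<in> OK q"
proof -
  obtain u r where "x = of_int u + of_int r * zq q"
    using assms by (auto simp: in_OK_iff)
  then have "cnj x = of_int (u + r * tr_zq q) + of_int (- r) * zq q"
    by (simp add: cnj_zq algebra_simps)
  then show ?thesis
    by (simp only: OK_of_coords)
qed

lemma OK_coords_eq_iff:
  assumes "q > 0"
  shows "of_int u + of_int r * zq q = (of_int u' + of_int r' * zq q :: complex) \<longleftrightarrow> u = u' \<and> r = r'"
proof
  assume eq: "of_int u + of_int r * zq q = (of_int u' + of_int r' * zq q :: complex)"
  have "lam q > 0"
    using assms lam_pos_iff by blast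
  moreover have "Im (of_int u + of_int r * zq q) = Im (of_int u' + of_int r' * zq q :: complex)"
    using eq by simp
  ultimately have "r = r'"
    by (simp add: zq_def)
  with eq show "u = u' \<and> r = r'"
    by simp
qed simp

lemma normK_mult: "normK (x * y) = normK x * normK y"
  by (simp add: normK_def norm_mult power_mult_distrib)

lemma mult_cnj_eq_normK: "x * cnj x = of_real (normK x)"
  by (metis complex_norm_square normK_def of_real_power)

lemma normK_coords:
  assumes "q \<in> class_number_one"
  shows "normK (of_int u + of_int r * zq q) = of_int (u^2 + tr_zq q * u * r + nm_zq q * r^2)"
  unfolding normK_def cmod_power2
  by (simp add: zq_def of_int_tr_zq of_int_nm_zq[OF assms] power2_eq_square algebra_simps)

lemma normK_OK_int:
  assumes "q \<in> class_number_one" and "w \<in> OK q"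
  obtains k :: int where "normK w = of_int k" and "k \<ge> 0"
proof -
  obtain u r where "w = of_int u + of_int r * zq q"
    using assms(2) by (auto simp: in_OK_iff)
  then have "normK w = of_int (u^2 + tr_zq q * u * r + nm_zq q * r^2)"
    using normK_coords[OF assms(1)] by simp
  moreover have "normK w \<ge> 0"
    by (simp add: normK_def)
  ultimately show ?thesis
    using that by (metis of_int_0_le_iff)
qed

definition OK_norm :: "nat \<Rightarrow> real \<Rightarrow> complex set" where
  "OK_norm q M = {w \<in> OK q. normK w = M}"

lemma OK_norm_coords:
  assumes "q \<in> class_number_one" and "\<alpha> \<in> OK_norm q (of_int k)"
  obtains u r where "\<alpha> = of_int u + of_int r * zq q" and "u^2 + tr_zq q * u * r + nm_zq q * r^2 = k"
proof -
  obtain u r where ur: "\<alpha> = of_int u + of_int r * zq q"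
    using assms(2) by (auto simp: OK_norm_def in_OK_iff)
  then have "real_of_int (u^2 + tr_zq q * u * r + nm_zq q * r^2) = of_int k"
    using assms normK_coords by (simp add: OK_norm_def)
  then show ?thesis
    using that ur by (simp only: of_int_eq_iff)
qed

lemma finite_OK_norm:
  assumes "q > 0"
  shows "finite (OK_norm q M)"
proof -
  have lam: "lam q > 0"
    using assms lam_pos_iff by blast
  define K where "K = ceiling (sqrt \<bar>M\<bar> + sqrt \<bar>M\<bar> / lam q)"
  have "OK_norm q M \<subseteq> (\<lambda>(u, r). of_int u + of_int r * zq q) ` ({-K..K} \<times> {-K..K})"
  proof
    fix w assume "w \<in> OK_norm q M"
    then obtain u r where w: "w = of_int u + of_int r * zq q" and "normK w = M"
      by (auto simp: OK_norm_def in_OK_iff)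
    then have cmod_w: "cmod w = sqrt \<bar>M\<bar>"
      by (auto simp: normK_def)
    have "\<bar>real_of_int r\<bar> * lam q \<le> sqrt \<bar>M\<bar>"
      using abs_Im_le_cmod[of w] lam cmod_w by (simp add: w zq_def abs_mult)
    then have r: "\<bar>real_of_int r\<bar> \<le> sqrt \<bar>M\<bar> / lam q"
      using lam by (simp add: field_simps)
    have "\<bar>real_of_int u + real_of_int r * mu q\<bar> \<le> sqrt \<bar>M\<bar>"
      using abs_Re_le_cmod[of w] cmod_w by (simp add: w zq_def)
    moreover have "\<bar>real_of_int r * mu q\<bar> \<le> \<bar>real_of_int r\<bar>"
      by (simp add: mu_def abs_mult)
    ultimately have "\<bar>real_of_int u\<bar> \<le> sqrt \<bar>M\<bar> + sqrt \<bar>M\<bar> / lam q"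
      using r by linarith
    moreover have "\<bar>real_of_int r\<bar> \<le> sqrt \<bar>M\<bar> + sqrt \<bar>M\<bar> / lam q"
      using r by (simp add: add_increasing)
    moreover have "sqrt \<bar>M\<bar> + sqrt \<bar>M\<bar> / lam q \<le> real_of_int K"
      unfolding K_def by (rule le_of_int_ceiling)
    ultimately have "\<bar>u\<bar> \<le> K" "\<bar>r\<bar> \<le> K"
      by linarith+
    then show "w \<in> (\<lambda>(u, r). of_int u + of_int r * zq q) ` ({-K..K} \<times> {-K..K})"
      using w by (auto intro!: image_eqI[of _ _ "(u, r)"])
  qed
  then show ?thesis
    by (rule finite_subset) auto
qed

lemma unitsK_eq_OK_norm_1:
  assumes "q \<in> class_number_one"
  shows "unitsK q = OK_norm q 1"
proof
  show "unitsK q \<subseteq> OK_norm q 1"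
  proof
    fix e assume "e \<in> unitsK q"
    then obtain v where e: "e \<in> OK q" and v: "v \<in> OK q" "e * v = 1"
      by (auto simp: unitsK_def)
    obtain k l where k: "normK e = of_int k" "k \<ge> 0" and l: "normK v = of_int l" "l \<ge> 0"
      using normK_OK_int[OF assms e] normK_OK_int[OF assms v(1)] by metis
    have "normK e * normK v = 1"
      using v(2) normK_mult[of e v] by (simp add: normK_def)
    then have "k * l = 1"
      using k l by (metis of_int_eq_1_iff of_int_mult)
    then have "normK e = 1"
      using k by (simp add: zmult_eq_1_iff)
    with e show "e \<in> OK_norm q 1"
      by (simp add: OK_norm_def)
  qed
  show "OK_norm q 1 \<subseteq> unitsK q"
  proof
    fix e assume "e \<in> OK_norm q 1"
    then have "e \<in> OK q" "cnj e \<in> OK q" "e * cnj e = 1"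
      using OK_cnj mult_cnj_eq_normK[of e] by (auto simp: OK_norm_def)
    then show "e \<in> unitsK q"
      by (auto simp: unitsK_def)
  qed
qed

lemma card_unitsK_pos:
  assumes "q \<in> class_number_one"
  shows "card (unitsK q) > 0"
proof -
  have "1 \<in> OK_norm q 1"
    using OK_of_int[of 1 q] by (simp add: OK_norm_def normK_def)
  moreover have "q > 0"
    using assms by auto
  ultimately show ?thesis
    using finite_OK_norm by (auto simp: unitsK_eq_OK_norm_1[OF assms] card_gt_0_iff)
qed

lemma minus_one_in_unitsK: "q \<in> class_number_one \<Longrightarrow> -1 \<in> unitsK q"
  using OK_of_int[of "-1" q] by (simp add: unitsK_eq_OK_norm_1 OK_norm_def normK_def)

lemma zq_4_in_unitsK: "zq 4 \<in> unitsK 4"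
  using normK_coords[of 4 0 1] OK_zq[of 4]
  by (simp add: unitsK_eq_OK_norm_1 OK_norm_def tr_zq_def nm_zq_def)

lemma bij_betw_mult_unit:
  assumes hq: "q \<in> class_number_one" and "e \<in> unitsK q"
  shows "bij_betw ((*) e) (OK_norm q M) (OK_norm q M)"
proof -
  have e: "e \<in> OK q" "cnj e \<in> OK q" "normK e = 1" "normK (cnj e) = 1" "cnj e * e = 1"
    using assms OK_cnj mult_cnj_eq_normK[of e]
    by (auto simp: unitsK_eq_OK_norm_1[OF hq] OK_norm_def normK_def mult.commute)
  show ?thesis
  proof (rule bij_betw_byWitness[where f' = "(*) (cnj e)"])
    show "(*) e ` OK_norm q M \<subseteq> OK_norm q M" "(*) (cnj e) ` OK_norm q M \<subseteq> OK_norm q M"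
      using e by (auto simp: OK_norm_def normK_mult OK_mult[OF hq])
  qed (use e in \<open>simp_all add: mult.assoc[symmetric] mult.commute[of e]\<close>)
qed

section \<open>Matrices and pairs of algebraic integers\<close>

definition mat_alpha :: "nat \<Rightarrow> int \<Rightarrow> int \<Rightarrow> int \<Rightarrow> int \<Rightarrow> complex" where
  "mat_alpha q a b c d = (of_int a * zq q + of_int b) - cnj (zq q) * (of_int c * zq q + of_int d)"

definition mat_beta :: "nat \<Rightarrow> int \<Rightarrow> int \<Rightarrow> int \<Rightarrow> int \<Rightarrow> complex" where
  "mat_beta q a b c d = (of_int a * zq q + of_int b) - zq q * (of_int c * zq q + of_int d)"

lemma mat_alpha_eq:
  "mat_alpha q a b c d = of_real (of_int b - (cmod (zq q))^2 * of_int c - 2 * mu q * of_int d)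
     + of_real (of_int (a + d)) * zq q"
  unfolding mat_alpha_def zq_def cmod_power2
  by (simp add: complex_eq_iff power2_eq_square algebra_simps)

lemma mat_beta_eq:
  "mat_beta q a b c d = of_real (of_int b + (cmod (zq q))^2 * of_int c)
     + of_real (of_int (a - d) - 2 * mu q * of_int c) * zq q"
  unfolding mat_beta_def zq_def cmod_power2
  by (simp add: complex_eq_iff power2_eq_square algebra_simps)

lemma mat_alpha_minus_mat_beta:
  "mat_alpha q a b c d - mat_beta q a b c d = disc_root q * (of_int c * zq q + of_int d)"
  by (simp add: mat_alpha_def mat_beta_def disc_root_def algebra_simps)

lemma normK_mat_alpha:
  "normK (mat_alpha q a b c d) = normK (mat_beta q a b c d) + real q * of_int (a * d - b * c)"
proof -
  have "real q = 4 * (lam q)^2"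
    by (simp add: lam_squared)
  then show ?thesis
    unfolding mat_alpha_def mat_beta_def normK_def zq_def cmod_power2
    by (simp add: power2_eq_square algebra_simps)
qed

lemma Rg_eq_normK_mat_beta:
  assumes "q > 0" and "a * d - b * c = 1"
  shows "Rg q a b c d = 2 * (lam q)^2 + normK (mat_beta q a b c d)"
proof -
  define z p m where "z = zq q" and "p = of_int a * z + of_int b" and "m = of_int c * z + of_int d"
  have lam: "lam q > 0"
    using assms(1) lam_pos_iff by blast
  have det: "of_int a * of_int d - of_int b * of_int c = (1::real)"
    using assms(2) by (metis of_int_1 of_int_diff of_int_mult)
  have "m \<noteq> 0"
  proof
    assume "m = 0"
    then have "c = 0" "d = 0"
      using lam by (auto simp: m_def z_def zq_def complex_eq_iff)
    then show False
      using assms(2) by simp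
  qed
  then have m_sq: "(cmod m)^2 > 0"
    by simp
  have "Im (p * cnj m) = lam q"
    using det by (simp add: p_def m_def z_def zq_def algebra_simps)
  moreover have "(cmod m)^2 = Re m * Re m + Im m * Im m"
    by (metis cmod_power2 power2_eq_square)
  ultimately have Im_pm: "Im (p / m) = lam q / (cmod m)^2"
    by (simp add: Im_divide power2_eq_square algebra_simps)
  have "z - p / m = - (p - z * m) / m"
    using \<open>m \<noteq> 0\<close> by (simp add: field_simps)
  then have "(cmod (z - p / m))^2 = (cmod (p - z * m))^2 / (cmod m)^2"
    by (simp add: norm_divide power_divide norm_minus_commute)
  then have "1 + (cmod (z - p / m))^2 / (2 * Im z * Im (p / m))
      = 1 + (cmod (p - z * m))^2 / (2 * (lam q)^2)"
    using m_sq lam \<open>m \<noteq> 0\<close> by (simp add: Im_pm z_def zq_def field_simps power2_eq_square)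
  moreover have "moeb a b c d z = p / m"
    by (simp add: moeb_def p_def m_def)
  moreover have "1 \<le> 1 + (cmod (p - z * m))^2 / (2 * (lam q)^2)"
    by simp
  ultimately have "cosh (hdist z (moeb a b c d z)) = 1 + (cmod (p - z * m))^2 / (2 * (lam q)^2)"
    by (simp add: hdist_def cosh_arcosh_real)
  then show ?thesis
    using lam by (simp add: Rg_def normK_def mat_beta_def p_def m_def z_def field_simps)
qed

lemma normK_mat_alpha_beta:
  assumes "q > 0" and det: "a * d - b * c = 1"
  shows "normK (mat_alpha q a b c d) = Rg q a b c d + 2 * (lam q)^2"
    and "normK (mat_beta q a b c d) = Rg q a b c d - 2 * (lam q)^2"
  using Rg_eq_normK_mat_beta[OF assms] normK_mat_alpha[of q a b c d] det by (simp_all add: lam_squared)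

lemma Complex_yg_xg:
  assumes "q > 0" and det: "a * d - b * c = 1"
  shows "Complex (yg q a b c d) (xg q a b c d) = mat_alpha q a b c d * cnj (mat_beta q a b c d)"
proof -
  have "of_int a * of_int d - of_int b * of_int c = (1::real)"
    using det by (metis of_int_1 of_int_diff of_int_mult)
  then show ?thesis
    unfolding yg_def xg_def Rg_eq_normK_mat_beta[OF assms]
    unfolding mat_alpha_def mat_beta_def normK_def zq_def cmod_power2
    by (simp add: power2_eq_square algebra_simps complex_eq_iff) algebra
qed

lemma xg_yg_factorisation:
  assumes hq: "q \<in> class_number_one" and det: "a * d - b * c = 1"
  shows "(let n = Rg q a b c d;
              r = real_of_int (a + d);
              u = real_of_int b - (cmod (zq q))^2 * c - 2 * mu q * d;
              s = real_of_int (a - d) - 2 * mu q * c;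
              t = real_of_int b + (cmod (zq q))^2 * c
          in r \<in> \<int> \<and> u \<in> \<int> \<and> s \<in> \<int> \<and> t \<in> \<int>
             \<and> normK (of_real u + of_real r * zq q) = n + 2 * (lam q)^2
             \<and> normK (of_real t + of_real s * zq q) = n - 2 * (lam q)^2
             \<and> Complex (yg q a b c d) (xg q a b c d)
                 = (of_real u + of_real r * zq q) * (of_real t + of_real s * cnj (zq q)))"
proof -
  have "q > 0"
    using hq by auto
  have "real_of_int b - (cmod (zq q))^2 * c - 2 * mu q * d \<in> \<int>"
    "real_of_int (a - d) - 2 * mu q * c \<in> \<int>" "real_of_int b + (cmod (zq q))^2 * c \<in> \<int>"
    unfolding cmod_zq_squared[OF hq] of_int_tr_zq[symmetric] by auto
  moreover have "of_real t + of_real s * cnj (zq q) = cnj (of_real t + of_real s * zq q)" for s t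
    by simp
  ultimately show ?thesis
    using normK_mat_alpha_beta[OF \<open>q > 0\<close> det] Complex_yg_xg[OF \<open>q > 0\<close> det] unfolding Let_def
    by (simp only: mat_alpha_eq mat_beta_eq Ints_of_int simp_thms)
qed

lemma mat_alpha_in_OK: "q \<in> class_number_one \<Longrightarrow> mat_alpha q a b c d \<in> OK q"
  unfolding mat_alpha_def by (intro OK_diff OK_add OK_mult OK_cnj OK_zq OK_of_int)

lemma mat_beta_in_OK: "q \<in> class_number_one \<Longrightarrow> mat_beta q a b c d \<in> OK q"
  unfolding mat_beta_def by (intro OK_diff OK_add OK_mult OK_zq OK_of_int)

section \<open>Congruent pairs and the set \<open>L\<^sub>n\<close>\<close>

definition congr_disc :: "nat \<Rightarrow> complex \<Rightarrow> complex \<Rightarrow> bool" where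
  "congr_disc q \<alpha> \<beta> \<longleftrightarrow> (\<alpha> - \<beta>) / disc_root q \<in> OK q"

lemma congr_disc_coords_iff:
  assumes hq: "q \<in> class_number_one"
  shows "congr_disc q (of_int u + of_int r * zq q) (of_int t + of_int w * zq q)
     \<longleftrightarrow> (\<exists>x y. u - t = - tr_zq q * x - 2 * nm_zq q * y \<and> r - w = 2 * x + tr_zq q * y)"
proof -
  have "q > 0"
    using hq by auto
  have D: "disc_root q * (of_int x + of_int y * zq q)
      = of_int (- tr_zq q * x - 2 * nm_zq q * y) + of_int (2 * x + tr_zq q * y) * zq q" for x y
  proof -
    have "disc_root q * (of_int x + of_int y * zq q)
        = of_int (- tr_zq q * x) + of_int (2 * x - tr_zq q * y) * zq q + 2 * of_int y * (zq q * zq q)"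
      by (simp add: disc_root_def cnj_zq algebra_simps)
    then show ?thesis
      unfolding zq_squared[OF hq] by (simp add: algebra_simps)
  qed
  have diff: "(of_int u + of_int r * zq q) - (of_int t + of_int w * zq q)
      = of_int (u - t) + of_int (r - w) * (zq q :: complex)"
    by (simp add: algebra_simps)
  have quot: "X / disc_root q = Y \<longleftrightarrow> X = disc_root q * Y" for X Y
    using disc_root_neq_0[OF \<open>q > 0\<close>] by (auto simp: field_simps)
  show ?thesis
    unfolding congr_disc_def in_OK_iff diff quot D OK_coords_eq_iff[OF \<open>q > 0\<close>] by blast
qed

lemma congr_disc_mat:
  assumes "q > 0"
  shows "congr_disc q (mat_alpha q a b c d) (mat_beta q a b c d)"
  using disc_root_neq_0[OF assms]
  by (simp add: congr_disc_def mat_alpha_minus_mat_beta OK_add OK_mult OK_of_int OK_zq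
      add.commute[of "of_int c * zq q"] OK_of_coords)

lemma congr_pair_eq_mat:
  assumes hq: "q \<in> class_number_one" and \<alpha>: "\<alpha> \<in> OK_norm q A" and \<beta>: "\<beta> \<in> OK_norm q (A - real q)"
    and congr: "congr_disc q \<alpha> \<beta>"
  obtains a b c d where "a * d - b * c = 1"
    and "\<alpha> = mat_alpha q a b c d" and "\<beta> = mat_beta q a b c d"
proof -
  have "q > 0"
    using hq by auto
  define m where "m = (\<alpha> - \<beta>) / disc_root q"
  obtain d c where m_eq: "m = of_int d + of_int c * zq q"
    using congr by (auto simp: congr_disc_def in_OK_iff m_def)
  have "m \<in> OK q"
    using congr by (simp add: congr_disc_def m_def)
  then have "\<alpha> + cnj (zq q) * m \<in> OK q"
    using \<alpha> by (intro OK_add OK_mult[OF hq] OK_cnj OK_zq) (simp_all add: OK_norm_def)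
  then obtain b a where p_eq: "\<alpha> + cnj (zq q) * m = of_int b + of_int a * zq q"
    by (auto simp: in_OK_iff)
  have \<alpha>_eq: "\<alpha> = mat_alpha q a b c d"
    using p_eq m_eq by (simp add: mat_alpha_def algebra_simps)
  have "\<beta> = \<alpha> - disc_root q * m"
    using disc_root_neq_0[OF \<open>q > 0\<close>] by (simp add: m_def)
  then have \<beta>_eq: "\<beta> = mat_beta q a b c d"
    using \<alpha>_eq mat_alpha_minus_mat_beta[of q a b c d] m_eq by (simp add: add.commute algebra_simps)
  have "A = (A - real q) + real q * of_int (a * d - b * c)"
    using normK_mat_alpha[of q a b c d] \<alpha> \<beta> by (simp add: OK_norm_def \<alpha>_eq \<beta>_eq)
  then have "real_of_int (a * d - b * c) = 1"
    using \<open>q > 0\<close> by simp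
  then have "a * d - b * c = 1"
    by linarith
  with \<alpha>_eq \<beta>_eq that show ?thesis
    by blast
qed

definition congr_pairs :: "nat \<Rightarrow> real \<Rightarrow> (complex \<times> complex) set" where
  "congr_pairs q A = {(\<alpha>, \<beta>). \<alpha> \<in> OK_norm q A \<and> \<beta> \<in> OK_norm q (A - real q) \<and> congr_disc q \<alpha> \<beta>}"

lemma finite_congr_pairs: "q > 0 \<Longrightarrow> finite (congr_pairs q A)"
  by (rule finite_subset[of _ "OK_norm q A \<times> OK_norm q (A - real q)"])
    (auto simp: congr_pairs_def finite_OK_norm)

lemma Lset_eq_image_congr_pairs:
  assumes hq: "q \<in> class_number_one"
  shows "Lset q n = (\<lambda>w. (Im w, Re w)) ` (\<lambda>(\<alpha>, \<beta>). \<alpha> * cnj \<beta>) ` congr_pairs q (n + 2 * (lam q)^2)"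
proof -
  have "q > 0"
    using hq by auto
  have shift: "n + 2 * (lam q)^2 - real q = n - 2 * (lam q)^2"
    by (simp add: lam_squared)
  have xy: "(xg q a b c d, yg q a b c d)
      = (\<lambda>w. (Im w, Re w)) (mat_alpha q a b c d * cnj (mat_beta q a b c d))" if "a * d - b * c = 1" for a b c d
    using Complex_yg_xg[OF \<open>q > 0\<close> that] by (metis complex.sel)
  show ?thesis
  proof
    show "Lset q n \<subseteq> (\<lambda>w. (Im w, Re w)) ` (\<lambda>(\<alpha>, \<beta>). \<alpha> * cnj \<beta>) ` congr_pairs q (n + 2 * (lam q)^2)"
    proof
      fix v assume "v \<in> Lset q n"
      then obtain a b c d where det: "a * d - b * c = 1" and "Rg q a b c d = n"
        and v: "v = (xg q a b c d, yg q a b c d)"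
        by (auto simp: Lset_def)
      then have "(mat_alpha q a b c d, mat_beta q a b c d) \<in> congr_pairs q (n + 2 * (lam q)^2)"
        using normK_mat_alpha_beta[OF \<open>q > 0\<close> det] mat_alpha_in_OK[OF hq] mat_beta_in_OK[OF hq] congr_disc_mat[OF \<open>q > 0\<close>]
        by (simp add: congr_pairs_def OK_norm_def shift)
      then have "mat_alpha q a b c d * cnj (mat_beta q a b c d)
          \<in> (\<lambda>(\<alpha>, \<beta>). \<alpha> * cnj \<beta>) ` congr_pairs q (n + 2 * (lam q)^2)"
        by (rule rev_image_eqI) simp
      then show "v \<in> (\<lambda>w. (Im w, Re w)) ` (\<lambda>(\<alpha>, \<beta>). \<alpha> * cnj \<beta>) ` congr_pairs q (n + 2 * (lam q)^2)"
        unfolding v xy[OF det] by (rule imageI)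
    qed
    show "(\<lambda>w. (Im w, Re w)) ` (\<lambda>(\<alpha>, \<beta>). \<alpha> * cnj \<beta>) ` congr_pairs q (n + 2 * (lam q)^2) \<subseteq> Lset q n"
    proof clarify
      fix \<alpha> \<beta> assume "(\<alpha>, \<beta>) \<in> congr_pairs q (n + 2 * (lam q)^2)"
      then have \<alpha>: "\<alpha> \<in> OK_norm q (n + 2 * (lam q)^2)"
        and \<beta>: "\<beta> \<in> OK_norm q (n + 2 * (lam q)^2 - real q)" and "congr_disc q \<alpha> \<beta>"
        by (simp_all add: congr_pairs_def)
      then obtain a b c d where det: "a * d - b * c = 1"
        and eqs: "\<alpha> = mat_alpha q a b c d" "\<beta> = mat_beta q a b c d"
        by (rule congr_pair_eq_mat[OF hq])
      have "normK \<beta> = n - 2 * (lam q)^2"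
        using \<beta> by (simp add: OK_norm_def shift)
      then have "Rg q a b c d = n"
        using normK_mat_alpha_beta(2)[OF \<open>q > 0\<close> det] eqs by simp
      moreover have "(Im (\<alpha> * cnj \<beta>), Re (\<alpha> * cnj \<beta>)) = (xg q a b c d, yg q a b c d)"
        using xy[OF det] eqs by simp
      ultimately show "(Im (\<alpha> * cnj \<beta>), Re (\<alpha> * cnj \<beta>)) \<in> Lset q n"
        using det unfolding Lset_def by blast
    qed
  qed
qed

lemma OK_of_mult_congr_pair:
  assumes hq: "q \<in> class_number_one" and "(\<alpha>, \<beta>) \<in> congr_pairs q A"
    and "\<xi> * \<alpha> \<in> OK q" and "congr_disc q (\<xi> * \<alpha>) (\<xi> * \<beta>)"
  shows "\<xi> \<in> OK q"
proof -
  have "\<alpha> \<in> OK_norm q A" "\<beta> \<in> OK_norm q (A - real q)" "congr_disc q \<alpha> \<beta>"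
    using assms(2) by (simp_all add: congr_pairs_def)
  then obtain a b c d where det: "a * d - b * c = 1"
    and eqs: "\<alpha> = mat_alpha q a b c d" "\<beta> = mat_beta q a b c d"
    by (rule congr_pair_eq_mat[OF hq])
  define p m where "p = of_int a * zq q + of_int b" and "m = of_int c * zq q + of_int d"
  have "q > 0"
    using hq by auto
  have "\<xi> * m = (\<xi> * \<alpha> - \<xi> * \<beta>) / disc_root q"
    using disc_root_neq_0[OF \<open>q > 0\<close>] mat_alpha_minus_mat_beta[of q a b c d]
    by (simp add: eqs m_def field_simps)
  then have \<xi>m: "\<xi> * m \<in> OK q"
    using assms(4) by (simp add: congr_disc_def)
  have "\<xi> * p = \<xi> * \<alpha> + cnj (zq q) * (\<xi> * m)"
    by (simp add: eqs mat_alpha_def p_def m_def algebra_simps)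
  then have \<xi>p: "\<xi> * p \<in> OK q"
    using assms(3) \<xi>m by (simp add: OK_add OK_mult[OF hq] OK_cnj OK_zq)
  have "\<xi> = of_int a * (\<xi> * m) - of_int c * (\<xi> * p)"
    using det by (simp add: p_def m_def algebra_simps flip: of_int_mult of_int_diff)
  also have "\<dots> \<in> OK q"
    using \<xi>m \<xi>p by (intro OK_diff OK_mult[OF hq OK_of_int])
  finally show ?thesis .
qed

lemma mult_unit_in_congr_pairs:
  assumes hq: "q \<in> class_number_one" and "e \<in> unitsK q" and "(\<alpha>, \<beta>) \<in> congr_pairs q A"
  shows "(e * \<alpha>, e * \<beta>) \<in> congr_pairs q A"
proof -
  have e: "e \<in> OK q" "normK e = 1"
    using assms(2) by (auto simp: unitsK_eq_OK_norm_1[OF hq] OK_norm_def)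
  have "(\<alpha> - \<beta>) / disc_root q \<in> OK q"
    using assms(3) by (simp add: congr_pairs_def congr_disc_def)
  then have "e * ((\<alpha> - \<beta>) / disc_root q) \<in> OK q"
    by (rule OK_mult[OF hq e(1)])
  moreover have "(e * \<alpha> - e * \<beta>) / disc_root q = e * ((\<alpha> - \<beta>) / disc_root q)"
    by (simp add: right_diff_distrib)
  ultimately have "congr_disc q (e * \<alpha>) (e * \<beta>)"
    by (simp only: congr_disc_def)
  with assms(3) e show ?thesis
    by (simp add: congr_pairs_def OK_norm_def OK_mult[OF hq] normK_mult)
qed

lemma congr_pairs_same_product:
  assumes hq: "q \<in> class_number_one" and "A > 0"
    and x: "(\<alpha>, \<beta>) \<in> congr_pairs q A" and y: "(\<alpha>', \<beta>') \<in> congr_pairs q A"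
    and f: "\<alpha>' * cnj \<beta>' = \<alpha> * cnj \<beta>"
  obtains e where "e \<in> unitsK q" and "\<alpha>' = e * \<alpha>" and "\<beta>' = e * \<beta>"
proof -
  have \<alpha>: "normK \<alpha> = A" and \<alpha>': "\<alpha>' \<in> OK q" "normK \<alpha>' = A" and congr': "congr_disc q \<alpha>' \<beta>'"
    using x y by (auto simp: congr_pairs_def OK_norm_def)
  then have "\<alpha> \<noteq> 0" "\<alpha>' \<noteq> 0"
    using \<open>A > 0\<close> by (auto simp: normK_def)
  define \<xi> where "\<xi> = \<alpha>' / \<alpha>"
  have \<xi>\<alpha>: "\<alpha>' = \<xi> * \<alpha>"
    using \<open>\<alpha> \<noteq> 0\<close> by (simp add: \<xi>_def)
  have "cnj \<alpha> = of_real A / \<alpha>" "cnj \<alpha>' = of_real A / \<alpha>'"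
    using mult_cnj_eq_normK[of \<alpha>] mult_cnj_eq_normK[of \<alpha>'] \<alpha> \<alpha>'(2) \<open>\<alpha> \<noteq> 0\<close> \<open>\<alpha>' \<noteq> 0\<close>
    by (simp_all add: field_simps)
  then have "cnj (\<xi> * \<beta>) = \<alpha> * cnj \<beta> / \<alpha>'"
    using \<open>A > 0\<close> \<open>\<alpha> \<noteq> 0\<close> \<open>\<alpha>' \<noteq> 0\<close> by (simp add: \<xi>_def field_simps)
  also have "\<dots> = cnj \<beta>'"
    using f \<open>\<alpha>' \<noteq> 0\<close> by (simp add: field_simps)
  finally have \<xi>\<beta>: "\<beta>' = \<xi> * \<beta>"
    by (metis complex_cnj_cnj)
  have "normK \<xi> = 1"
    using \<alpha> \<alpha>'(2) \<open>A > 0\<close> by (simp add: \<xi>_def normK_def norm_divide power_divide)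
  moreover have "\<xi> \<in> OK q"
    using OK_of_mult_congr_pair[OF hq x] \<alpha>' congr' by (simp add: \<xi>\<alpha> \<xi>\<beta>)
  ultimately have "\<xi> \<in> unitsK q"
    by (simp add: unitsK_eq_OK_norm_1[OF hq] OK_norm_def)
  with \<xi>\<alpha> \<xi>\<beta> that show ?thesis
    by blast
qed

lemma congr_pairs_fibre:
  assumes hq: "q \<in> class_number_one" and "A > 0" and x: "(\<alpha>, \<beta>) \<in> congr_pairs q A"
  shows "{y \<in> congr_pairs q A. (\<lambda>(\<alpha>', \<beta>'). \<alpha>' * cnj \<beta>') y = \<alpha> * cnj \<beta>}
    = (\<lambda>e. (e * \<alpha>, e * \<beta>)) ` unitsK q"
proof (intro equalityI subsetI)
  fix y assume "y \<in> (\<lambda>e. (e * \<alpha>, e * \<beta>)) ` unitsK q"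
  then obtain e where e: "e \<in> unitsK q" and y: "y = (e * \<alpha>, e * \<beta>)"
    by blast
  then have "e * cnj e = 1"
    using mult_cnj_eq_normK[of e] by (simp add: unitsK_eq_OK_norm_1[OF hq] OK_norm_def)
  moreover have "e * \<alpha> * cnj (e * \<beta>) = (e * cnj e) * (\<alpha> * cnj \<beta>)"
    by (simp add: algebra_simps)
  ultimately show "y \<in> {y \<in> congr_pairs q A. (\<lambda>(\<alpha>', \<beta>'). \<alpha>' * cnj \<beta>') y = \<alpha> * cnj \<beta>}"
    using mult_unit_in_congr_pairs[OF hq e x] by (simp add: y)
next
  fix y assume "y \<in> {y \<in> congr_pairs q A. (\<lambda>(\<alpha>', \<beta>'). \<alpha>' * cnj \<beta>') y = \<alpha> * cnj \<beta>}"
  then obtain \<alpha>' \<beta>' where y: "y = (\<alpha>', \<beta>')" "(\<alpha>', \<beta>') \<in> congr_pairs q A"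
    and f: "\<alpha>' * cnj \<beta>' = \<alpha> * cnj \<beta>"
    by (cases y) auto
  obtain e where "e \<in> unitsK q" "\<alpha>' = e * \<alpha>" "\<beta>' = e * \<beta>"
    by (rule congr_pairs_same_product[OF hq \<open>A > 0\<close> x y(2) f])
  then show "y \<in> (\<lambda>e. (e * \<alpha>, e * \<beta>)) ` unitsK q"
    unfolding y by blast
qed

lemma card_congr_pairs_eq_card_Lset:
  assumes hq: "q \<in> class_number_one" and "n \<in> Nset q"
  shows "card (congr_pairs q (n + 2 * (lam q)^2)) = card (unitsK q) * card (Lset q n)"
proof -
  define A where "A = n + 2 * (lam q)^2"
  define f :: "complex \<times> complex \<Rightarrow> complex" where "f = (\<lambda>(\<alpha>, \<beta>). \<alpha> * cnj \<beta>)"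
  have "q > 0"
    using hq by auto
  obtain a b c d where "a * d - b * c = 1" and "n = Rg q a b c d"
    using assms(2) by (auto simp: Nset_def)
  then have "A - real q = normK (mat_beta q a b c d)"
    using normK_mat_alpha_beta(2)[OF \<open>q > 0\<close>] by (simp add: A_def lam_squared)
  moreover have "normK (mat_beta q a b c d) \<ge> 0"
    by (simp add: normK_def)
  ultimately have "A > 0"
    using \<open>q > 0\<close> by linarith
  have "card {y \<in> congr_pairs q A. f y = f x} = card (unitsK q)" if "x \<in> congr_pairs q A" for x
  proof -
    obtain \<alpha> \<beta> where x: "x = (\<alpha>, \<beta>)"
      by (cases x)
    then have "\<alpha> \<noteq> 0"
      using that \<open>A > 0\<close> by (auto simp: congr_pairs_def OK_norm_def normK_def)
    then have "inj_on (\<lambda>e. (e * \<alpha>, e * \<beta>)) (unitsK q)"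
      by (auto intro: inj_onI)
    then show ?thesis
      using congr_pairs_fibre[OF hq \<open>A > 0\<close>] that by (simp add: x f_def card_image)
  qed
  then have "card (congr_pairs q A) = card (unitsK q) * card (f ` congr_pairs q A)"
    by (rule card_eq_mult_card_image[OF finite_congr_pairs[OF \<open>q > 0\<close>]])
  moreover have "card (Lset q n) = card (f ` congr_pairs q A)"
    unfolding Lset_eq_image_congr_pairs[OF hq] A_def f_def
    by (rule card_image) (auto intro: inj_onI simp: complex_eq_iff)
  ultimately show ?thesis
    by (simp add: A_def)
qed

section \<open>Binary quadratic forms modulo small numbers\<close>

text \<open>The norm form of \<open>O\<^sub>K\<close> in the basis \<open>1, z\<^sub>q\<close> is \<open>u\<^sup>2 + r\<^sup>2\<close> for \<open>q = 4\<close>,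
  \<open>u\<^sup>2 + 2r\<^sup>2\<close> for \<open>q = 8\<close> and \<open>u\<^sup>2 + ur + n r\<^sup>2\<close> with \<open>4n = q + 1\<close> for odd \<open>q\<close>.\<close>

lemma square_mod_4: "(x::int)^2 mod 4 = (if even x then 0 else 1)"
proof (cases "even x")
  case True
  then obtain k where "x = 2 * k"
    by blast
  then show ?thesis
    by (simp add: power2_eq_square)
next
  case False
  then obtain k where "x = 2 * k + 1"
    by (metis oddE)
  then have "x^2 = 4 * (k^2 + k) + 1"
    by (simp add: power2_eq_square algebra_simps)
  then show ?thesis
    using False by presburger
qed

lemma odd_square_mod_8:
  assumes "odd (x::int)"
  shows "x^2 mod 8 = 1"
proof -
  obtain k where k: "x = 2 * k + 1"
    using assms by (metis oddE)
  obtain j where "k * (k + 1) = 2 * j"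
    by (metis evenE even_mult_iff odd_add odd_one)
  then have "x^2 = 8 * j + 1"
    using k by (simp add: power2_eq_square algebra_simps)
  then show ?thesis
    by presburger
qed

lemma even_square_mod_16:
  assumes "even (x::int)"
  shows "x^2 mod 16 = (if 4 dvd x then 0 else 4)"
proof -
  obtain k where k: "x = 2 * k"
    using assms by blast
  then have "x^2 mod 16 = 4 * (k^2 mod 4)"
    using mod_mult_mult1[of 4 "k^2" 4] by (simp add: power2_eq_square)
  moreover have "4 dvd x \<longleftrightarrow> even k"
    using k by auto
  ultimately show ?thesis
    using square_mod_4[of k] by auto
qed

lemma norm_form_4_congr:
  fixes u r t w k :: int
  assumes "u^2 + r^2 = k" and "t^2 + w^2 = k - 4" and "even k"
  shows "even (u - t) \<and> even (r - w)"
proof -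
  have "even (u^2 + r^2)" "even (t^2 + w^2)"
    using assms by simp_all
  then have "even (u + r)" "even (t + w)"
    by simp_all
  moreover have "k mod 4 = (u^2 mod 4 + r^2 mod 4) mod 4" "(k - 4) mod 4 = (t^2 mod 4 + w^2 mod 4) mod 4"
    using assms(1,2) by (simp_all add: mod_add_eq)
  ultimately have "k mod 4 = (if odd u then 2 else 0)" "(k - 4) mod 4 = (if odd t then 2 else 0)"
    using square_mod_4 by (auto simp: even_add)
  moreover have "(k - 4) mod 4 = k mod 4"
    by presburger
  ultimately have "odd u \<longleftrightarrow> odd t"
    by (auto split: if_splits)
  with \<open>even (u + r)\<close> \<open>even (t + w)\<close> show ?thesis
    by presburger
qed

lemma norm_form_4_congr_alt:
  fixes u r t w k :: int
  assumes "u^2 + r^2 = k" and "t^2 + w^2 = k - 4" and "odd k"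
  shows "(even (u - t) \<and> even (r - w)) \<longleftrightarrow> \<not> (even (u + w) \<and> even (r - t))"
proof -
  have "odd (u^2 + r^2)" "odd (t^2 + w^2)"
    using assms by simp_all
  then have "odd (u + r)" "odd (t + w)"
    by simp_all
  then show ?thesis
    by presburger
qed

lemma norm_form_8_even:
  fixes u r k :: int
  assumes k: "u^2 + 2 * r^2 = k" and "even k"
  shows "even u" and "k mod 4 = (if odd r then 2 else 0)"
    and "odd r \<Longrightarrow> k mod 16 = 2 \<or> k mod 16 = 6"
    and "even r \<Longrightarrow> k mod 8 = (if 4 dvd u then 0 else 4)"
proof -
  have "even (u^2 + 2 * r^2)"
    using assms by simp
  then show u: "even u"
    by simp
  have "k mod 4 = (u^2 mod 4 + (2 * r^2) mod 4) mod 4"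
    using k by (simp add: mod_add_eq)
  moreover have "(2 * r^2) mod 4 = 2 * (r^2 mod 2)"
    using mod_mult_mult1[of 2 "r^2" 2] by simp
  ultimately show "k mod 4 = (if odd r then 2 else 0)"
    using square_mod_4[of u] u by (auto simp: odd_iff_mod_2_eq_one[symmetric])
  show "k mod 16 = 2 \<or> k mod 16 = 6" if r: "odd r"
  proof -
    have "k mod 16 = (u^2 mod 16 + (2 * r^2) mod 16) mod 16"
      using k by (simp add: mod_add_eq)
    moreover have "(2 * r^2) mod 16 = 2"
      using mod_mult_mult1[of 2 "r^2" 8] odd_square_mod_8[OF r] by simp
    ultimately show ?thesis
      using even_square_mod_16[OF u] by (auto split: if_splits)
  qed
  show "k mod 8 = (if 4 dvd u then 0 else 4)" if r: "even r"
  proof -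
    obtain j where "r = 2 * j"
      using r by blast
    then have "k = u^2 + 8 * j^2"
      using k by (simp add: power2_eq_square)
    then have "k mod 8 = (u^2 mod 16) mod 8"
      by (simp add: mod_mod_cancel)
    then show ?thesis
      using even_square_mod_16[OF u] by auto
  qed
qed

lemma norm_form_8_congr:
  fixes u r t w k :: int
  assumes k: "u^2 + 2 * r^2 = k" and k8: "t^2 + 2 * w^2 = k - 8" and "even k"
  shows "4 dvd (u - t) \<and> even (r - w)"
proof -
  have "even (k - 8)"
    using \<open>even k\<close> by simp
  note K = norm_form_8_even[OF k \<open>even k\<close>] and K8 = norm_form_8_even[OF k8 \<open>even (k - 8)\<close>]
  have "(k - 8) mod 4 = k mod 4" "(k - 8) mod 8 = k mod 8"
    by presburger+
  then have rw: "odd r \<longleftrightarrow> odd w"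
    using K(2) K8(2) by (auto split: if_splits)
  have "even r"
  proof (rule ccontr)
    assume "odd r"
    then have "k mod 16 = 2 \<or> k mod 16 = 6" "(k - 8) mod 16 = 2 \<or> (k - 8) mod 16 = 6"
      using K(3) K8(3) rw by auto
    then show False
      by presburger
  qed
  then have "4 dvd u \<longleftrightarrow> 4 dvd t"
    using K(4) K8(4) rw \<open>(k - 8) mod 8 = k mod 8\<close> by (auto split: if_splits)
  then show ?thesis
    using K(1) K8(1) \<open>even r\<close> rw by presburger
qed

lemma norm_form_8_congr_alt:
  fixes u r t w k :: int
  assumes k: "u^2 + 2 * r^2 = k" and k8: "t^2 + 2 * w^2 = k - 8" and "odd k"
  shows "(4 dvd (u - t) \<and> even (r - w)) \<longleftrightarrow> \<not> (4 dvd (u + t) \<and> even (r + w))"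
proof -
  have mod8: "m mod 8 = (if odd y then 3 else 1)" if "x^2 + 2 * y^2 = m" and "odd m" for x y m :: int
  proof -
    have "odd (x^2 + 2 * y^2)"
      using that by simp
    then have "odd x"
      by simp
    have "m mod 8 = (x^2 mod 8 + (2 * y^2) mod 8) mod 8"
      using that(1) by (simp add: mod_add_eq)
    moreover have "(2 * y^2) mod 8 = 2 * (y^2 mod 4)"
      using mod_mult_mult1[of 2 "y^2" 4] by simp
    ultimately show ?thesis
      using odd_square_mod_8[OF \<open>odd x\<close>] square_mod_4[of y] by auto
  qed
  have "odd (u^2 + 2 * r^2)" "odd (t^2 + 2 * w^2)"
    using assms by simp_all
  then have "odd u" "odd t"
    by simp_all
  have "k mod 8 = (if odd r then 3 else 1)" "(k - 8) mod 8 = (if odd w then 3 else 1)"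
    using mod8[OF k] mod8[OF k8] \<open>odd k\<close> by simp_all
  moreover have "(k - 8) mod 8 = k mod 8"
    by presburger
  ultimately have "odd r \<longleftrightarrow> odd w"
    by (auto split: if_splits)
  with \<open>odd u\<close> \<open>odd t\<close> show ?thesis
    by presburger
qed

lemma norm_form_odd_square:
  fixes q n u r k :: int
  assumes "4 * n = q + 1" and "u^2 + u * r + n * r^2 = k"
  shows "(2 * u + r)^2 = 4 * k - q * r^2"
proof -
  have "(2 * u + r)^2 = 4 * (u^2 + u * r + n * r^2) - (4 * n - 1) * r^2"
    by (simp add: power2_eq_square algebra_simps)
  then show ?thesis
    using assms by simp
qed

lemma norm_form_odd_congr:
  fixes q n u r t w k :: int
  assumes "prime q" and n: "4 * n = q + 1" and "q dvd k"
    and k: "u^2 + u * r + n * r^2 = k" and kq: "t^2 + t * w + n * w^2 = k - q"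
  shows "q dvd 2 * (u - t) + (r - w)"
proof -
  have "q dvd 4 * k - q * r^2" "q dvd 4 * (k - q) - q * w^2"
    using \<open>q dvd k\<close> by simp_all
  then have "q dvd (2 * u + r)^2" "q dvd (2 * t + w)^2"
    by (simp_all only: norm_form_odd_square[OF n k] norm_form_odd_square[OF n kq])
  then have "q dvd (2 * u + r) - (2 * t + w)"
    using prime_dvd_power[OF \<open>prime q\<close>] by (simp add: dvd_diff)
  then show ?thesis
    by (simp add: algebra_simps)
qed

lemma norm_form_odd_congr_alt:
  fixes q n u r t w k :: int
  assumes "prime q" and "odd q" and n: "4 * n = q + 1" and "\<not> q dvd k"
    and k: "u^2 + u * r + n * r^2 = k" and kq: "t^2 + t * w + n * w^2 = k - q"
  shows "q dvd 2 * (u - t) + (r - w) \<longleftrightarrow> \<not> q dvd 2 * (u + t) + (r + w)"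
proof -
  define X Y where "X = 2 * u + r" and "Y = 2 * t + w"
  have X2: "X^2 = 4 * k - q * r^2" and Y2: "Y^2 = 4 * (k - q) - q * w^2"
    unfolding X_def Y_def using norm_form_odd_square[OF n k] norm_form_odd_square[OF n kq] .
  have "(X - Y) * (X + Y) = X^2 - Y^2"
    by (simp add: power2_eq_square algebra_simps)
  also have "\<dots> = q * (4 - r^2 + w^2)"
    unfolding X2 Y2 by (simp add: algebra_simps)
  finally have "(X - Y) * (X + Y) = q * (4 - r^2 + w^2)" .
  then have "q dvd (X - Y) * (X + Y)"
    by simp
  then have "q dvd X - Y \<or> q dvd X + Y"
    by (simp add: prime_dvd_mult_iff[OF \<open>prime q\<close>])
  moreover have "\<not> q dvd 2"
    using \<open>prime q\<close> \<open>odd q\<close> primes_dvd_imp_eq[of q 2] by auto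
  have "\<not> (q dvd X - Y \<and> q dvd X + Y)"
  proof
    assume "q dvd X - Y \<and> q dvd X + Y"
    then have "q dvd (X - Y) + (X + Y)"
      by (blast intro: dvd_add)
    moreover have "(X - Y) + (X + Y) = 2 * X"
      by simp
    ultimately have "q dvd 2 \<or> q dvd X"
      using prime_dvd_mult_iff[OF \<open>prime q\<close>] by metis
    then have "q dvd X * X"
      using \<open>\<not> q dvd 2\<close> by simp
    then have "q dvd 4 * k - q * r^2"
      using X2 by (simp add: power2_eq_square)
    then have "q dvd (4 * k - q * r^2) + q * r^2"
      by (rule dvd_add) simp
    then have "q dvd 2 * (2 * k)"
      by simp
    then have "q dvd 2 \<or> q dvd k"
      using prime_dvd_mult_iff[OF \<open>prime q\<close>] by metis
    then show False
      using \<open>\<not> q dvd 2\<close> \<open>\<not> q dvd k\<close> by blast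
  qed
  moreover have "2 * (u - t) + (r - w) = X - Y" "2 * (u + t) + (r + w) = X + Y"
    by (simp_all add: X_def Y_def)
  ultimately show ?thesis
    by auto
qed

section \<open>Counting congruent pairs\<close>

lemma congr_disc_odd_iff:
  assumes hq: "q \<in> class_number_one" and "odd q"
  shows "congr_disc q (of_int u + of_int r * zq q) (of_int t + of_int w * zq q)
    \<longleftrightarrow> int q dvd 2 * (u - t) + (r - w)"
proof -
  have tr: "tr_zq q = 1" and nm: "4 * nm_zq q = int q + 1"
    using \<open>odd q\<close> four_nm_zq[OF hq] by (auto simp: tr_zq_def)
  have "(\<exists>x y. e = - x - 2 * nm_zq q * y \<and> f = 2 * x + y) \<longleftrightarrow> int q dvd 2 * e + f" for e f
  proof
    assume "\<exists>x y. e = - x - 2 * nm_zq q * y \<and> f = 2 * x + y"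
    then obtain x y where "e = - x - 2 * nm_zq q * y" "f = 2 * x + y"
      by blast
    then have "2 * e + f = y - (4 * nm_zq q) * y"
      by (simp add: algebra_simps)
    also have "\<dots> = int q * (- y)"
      unfolding nm by (simp add: algebra_simps)
    finally show "int q dvd 2 * e + f"
      by simp
  next
    assume "int q dvd 2 * e + f"
    then obtain j where j: "2 * e + f = int q * j"
      by blast
    have "odd (int q)"
      using \<open>odd q\<close> by simp
    then obtain h where h: "int q = 2 * h + 1"
      by (rule oddE)
    then have "2 * nm_zq q = h + 1"
      using nm by simp
    then show "\<exists>x y. e = - x - 2 * nm_zq q * y \<and> f = 2 * x + y"
      using j h by (intro exI[of _ "e + f - h * j"] exI[of _ "- j"]) (simp add: algebra_simps)
  qed
  then show ?thesis
    using congr_disc_coords_iff[OF hq] by (simp add: tr)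
qed

lemma congr_disc_4_iff:
  "congr_disc 4 (of_int u + of_int r * zq 4) (of_int t + of_int w * zq 4)
    \<longleftrightarrow> even (u - t) \<and> even (r - w)"
proof -
  have "tr_zq 4 = 0" "nm_zq 4 = 1"
    by (simp_all add: tr_zq_def nm_zq_def)
  moreover have "(\<exists>x y. u - t = - 2 * y \<and> r - w = 2 * x) \<longleftrightarrow> even (u - t) \<and> even (r - w)"
    by presburger
  ultimately show ?thesis
    using congr_disc_coords_iff[of 4] by simp
qed

lemma congr_disc_8_iff:
  "congr_disc 8 (of_int u + of_int r * zq 8) (of_int t + of_int w * zq 8)
    \<longleftrightarrow> 4 dvd (u - t) \<and> even (r - w)"
proof -
  have "tr_zq 8 = 0" "nm_zq 8 = 2"
    by (simp_all add: tr_zq_def nm_zq_def)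
  moreover have "(\<exists>x y. u - t = - 4 * y \<and> r - w = 2 * x) \<longleftrightarrow> 4 dvd (u - t) \<and> even (r - w)"
    by presburger
  ultimately show ?thesis
    using congr_disc_coords_iff[of 8] by simp
qed

lemma prime_class_number_one_odd:
  assumes "q \<in> class_number_one" and "odd q"
  shows "prime (int q)"
proof -
  have "q \<in> {3, 7, 11, 19, 43, 67, 163}"
    using assms by auto
  then have "prime q"
    by (auto simp: prime_nat_iff' atLeastLessThan_nat_numeral)
  then show ?thesis
    by simp
qed

lemma congr_disc_odd:
  assumes hq: "q \<in> class_number_one" and "odd q"
    and \<alpha>: "\<alpha> \<in> OK_norm q (of_int k)" and \<beta>: "\<beta> \<in> OK_norm q (of_int k - real q)"
  shows "int q dvd k \<Longrightarrow> congr_disc q \<alpha> \<beta>"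
    and "\<not> int q dvd k \<Longrightarrow> congr_disc q \<alpha> \<beta> \<longleftrightarrow> \<not> congr_disc q \<alpha> (- \<beta>)"
proof -
  have tr: "tr_zq q = 1" and nm: "4 * nm_zq q = int q + 1"
    using \<open>odd q\<close> four_nm_zq[OF hq] by (auto simp: tr_zq_def)
  obtain u r where \<alpha>_eq: "\<alpha> = of_int u + of_int r * zq q" and k: "u^2 + u * r + nm_zq q * r^2 = k"
    using OK_norm_coords[OF hq \<alpha>] tr by auto
  have \<beta>': "\<beta> \<in> OK_norm q (of_int (k - int q))"
    using \<beta> by simp
  obtain t w where \<beta>_eq: "\<beta> = of_int t + of_int w * zq q"
    and kq: "t^2 + t * w + nm_zq q * w^2 = k - int q"
    using OK_norm_coords[OF hq \<beta>'] tr by auto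
  have neg_\<beta>: "- \<beta> = of_int (- t) + of_int (- w) * zq q"
    by (simp add: \<beta>_eq)
  note prime = prime_class_number_one_odd[OF hq \<open>odd q\<close>]
  show "congr_disc q \<alpha> \<beta>" if "int q dvd k"
    unfolding \<alpha>_eq \<beta>_eq congr_disc_odd_iff[OF hq \<open>odd q\<close>]
    by (rule norm_form_odd_congr[OF prime nm that k kq])
  show "congr_disc q \<alpha> \<beta> \<longleftrightarrow> \<not> congr_disc q \<alpha> (- \<beta>)" if "\<not> int q dvd k"
    unfolding neg_\<beta> unfolding \<alpha>_eq \<beta>_eq congr_disc_odd_iff[OF hq \<open>odd q\<close>]
    using norm_form_odd_congr_alt[OF prime _ nm that k kq] \<open>odd q\<close> by simp
qed

lemma congr_disc_4:
  assumes \<alpha>: "\<alpha> \<in> OK_norm 4 (of_int k)" and \<beta>: "\<beta> \<in> OK_norm 4 (of_int k - 4)"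
  shows "even k \<Longrightarrow> congr_disc 4 \<alpha> \<beta>"
    and "odd k \<Longrightarrow> congr_disc 4 \<alpha> \<beta> \<longleftrightarrow> \<not> congr_disc 4 \<alpha> (zq 4 * \<beta>)"
proof -
  have hq: "(4::nat) \<in> class_number_one" and tr: "tr_zq 4 = 0" and nm: "nm_zq 4 = 1"
    by (simp_all add: tr_zq_def nm_zq_def)
  obtain u r where \<alpha>_eq: "\<alpha> = of_int u + of_int r * zq 4" and k: "u^2 + r^2 = k"
    using OK_norm_coords[OF hq \<alpha>] tr nm by auto
  have \<beta>': "\<beta> \<in> OK_norm 4 (of_int (k - 4))"
    using \<beta> by simp
  obtain t w where \<beta>_eq: "\<beta> = of_int t + of_int w * zq 4" and k4: "t^2 + w^2 = k - 4"
    using OK_norm_coords[OF hq \<beta>'] tr nm by auto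
  have "zq 4 * \<beta> = of_int t * zq 4 + of_int w * (zq 4 * zq 4)"
    by (simp add: \<beta>_eq algebra_simps)
  also have "\<dots> = of_int (- w) + of_int t * zq 4"
    using zq_squared[OF hq] tr nm by simp
  finally have i\<beta>: "zq 4 * \<beta> = of_int (- w) + of_int t * zq 4" .
  show "congr_disc 4 \<alpha> \<beta>" if "even k"
    unfolding \<alpha>_eq \<beta>_eq congr_disc_4_iff by (rule norm_form_4_congr[OF k k4 that])
  show "congr_disc 4 \<alpha> \<beta> \<longleftrightarrow> \<not> congr_disc 4 \<alpha> (zq 4 * \<beta>)" if "odd k"
    unfolding i\<beta> unfolding \<alpha>_eq \<beta>_eq congr_disc_4_iff using norm_form_4_congr_alt[OF k k4 that] by simp
qed

lemma congr_disc_8: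
  assumes \<alpha>: "\<alpha> \<in> OK_norm 8 (of_int k)" and \<beta>: "\<beta> \<in> OK_norm 8 (of_int k - 8)"
  shows "even k \<Longrightarrow> congr_disc 8 \<alpha> \<beta>"
    and "odd k \<Longrightarrow> congr_disc 8 \<alpha> \<beta> \<longleftrightarrow> \<not> congr_disc 8 \<alpha> (- \<beta>)"
proof -
  have hq: "(8::nat) \<in> class_number_one" and tr: "tr_zq 8 = 0" and nm: "nm_zq 8 = 2"
    by (simp_all add: tr_zq_def nm_zq_def)
  obtain u r where \<alpha>_eq: "\<alpha> = of_int u + of_int r * zq 8" and k: "u^2 + 2 * r^2 = k"
    using OK_norm_coords[OF hq \<alpha>] tr nm by auto
  have \<beta>': "\<beta> \<in> OK_norm 8 (of_int (k - 8))"
    using \<beta> by simp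
  obtain t w where \<beta>_eq: "\<beta> = of_int t + of_int w * zq 8" and k8: "t^2 + 2 * w^2 = k - 8"
    using OK_norm_coords[OF hq \<beta>'] tr nm by auto
  have neg_\<beta>: "- \<beta> = of_int (- t) + of_int (- w) * zq 8"
    by (simp add: \<beta>_eq)
  show "congr_disc 8 \<alpha> \<beta>" if "even k"
    unfolding \<alpha>_eq \<beta>_eq congr_disc_8_iff by (rule norm_form_8_congr[OF k k8 that])
  show "congr_disc 8 \<alpha> \<beta> \<longleftrightarrow> \<not> congr_disc 8 \<alpha> (- \<beta>)" if "odd k"
    unfolding neg_\<beta> unfolding \<alpha>_eq \<beta>_eq congr_disc_8_iff using norm_form_8_congr_alt[OF k k8 that] by simp
qed

lemma cn_odd:
  assumes "odd q"
  shows "cn q (of_int k - real q / 2) = (if int q dvd k then 1/2 else 1/4)"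
proof -
  have "q > 0"
    using assms by (cases q) auto
  have "2 * (of_int k - real q / 2) / real q \<in> \<int> \<longleftrightarrow> int q dvd k"
  proof
    assume "2 * (of_int k - real q / 2) / real q \<in> \<int>"
    then obtain j where "2 * (of_int k - real q / 2) / real q = of_int j"
      by (auto elim: Ints_cases)
    then have "real_of_int (2 * k) = real_of_int (int q * (j + 1))"
      using \<open>q > 0\<close> by (simp add: field_simps)
    then have "int q dvd 2 * k"
      by (simp only: of_int_eq_iff) simp
    moreover have "coprime (int q) 2"
      using assms by simp
    ultimately show "int q dvd k"
      by (simp add: coprime_dvd_mult_right_iff)
  next
    assume "int q dvd k"
    then obtain j where "k = int q * j"
      by blast
    then have "2 * (of_int k - real q / 2) / real q = of_int (2 * j - 1)"
      using \<open>q > 0\<close> by (simp add: field_simps)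
    then show "2 * (of_int k - real q / 2) / real q \<in> \<int>"
      by simp
  qed
  then show ?thesis
    using assms by (auto simp: cn_def)
qed

lemma cn_even:
  assumes "q = 4 \<or> q = 8"
  shows "cn q (of_int k - real q / 2) = (if even k then 1/2 else 1/4)"
proof -
  have "(of_int k - real q / 2) / 2 \<in> \<int> \<longleftrightarrow> even k"
  proof
    assume "(of_int k - real q / 2) / 2 \<in> \<int>"
    then obtain j where "(of_int k - real q / 2) / 2 = of_int j"
      by (auto elim: Ints_cases)
    then have "real_of_int k = real_of_int (2 * j + int q div 2)"
      using assms by auto
    then have "k = 2 * j + int q div 2"
      by (simp only: of_int_eq_iff)
    then show "even k"
      using assms by auto
  next
    assume "even k"
    then obtain j where "k = 2 * j"
      by blast
    then have "(of_int k - real q / 2) / 2 = of_int (j - int q div 4)"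
      using assms by auto
    then show "(of_int k - real q / 2) / 2 \<in> \<int>"
      by (metis Ints_of_int)
  qed
  then show ?thesis
    using assms by (auto simp: cn_def)
qed

lemma congr_disc_dichotomy:
  assumes hq: "q \<in> class_number_one"
  obtains (all) "cn q (of_int k - real q / 2) = 1/2"
      and "\<And>\<alpha> \<beta>. \<alpha> \<in> OK_norm q (of_int k) \<Longrightarrow> \<beta> \<in> OK_norm q (of_int k - real q) \<Longrightarrow> congr_disc q \<alpha> \<beta>"
  | (half) e where "cn q (of_int k - real q / 2) = 1/4" and "e \<in> unitsK q"
      and "\<And>\<alpha> \<beta>. \<alpha> \<in> OK_norm q (of_int k) \<Longrightarrow> \<beta> \<in> OK_norm q (of_int k - real q)
             \<Longrightarrow> congr_disc q \<alpha> (e * \<beta>) \<longleftrightarrow> \<not> congr_disc q \<alpha> \<beta>"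
proof -
  consider "odd q" | "q = 4" | "q = 8"
    using hq by auto
  then show ?thesis
  proof cases
    case 1
    then show ?thesis
      using that congr_disc_odd[OF hq 1] cn_odd[OF 1] minus_one_in_unitsK[OF hq]
      by (cases "int q dvd k") auto
  next
    case 2
    then show ?thesis
      using that congr_disc_4 cn_even[of q k] zq_4_in_unitsK
      by (cases "even k") auto
  next
    case 3
    then show ?thesis
      using that congr_disc_8 cn_even[of q k] minus_one_in_unitsK[OF hq]
      by (cases "even k") auto
  qed
qed

lemma card_congr_pairs:
  assumes hq: "q \<in> class_number_one"
  shows "real (card (congr_pairs q (of_int k)))
    = 2 * cn q (of_int k - real q / 2) * real (rK q (of_int k)) * real (rK q (of_int k - real q))"
proof -
  define SA SB where "SA = OK_norm q (of_int k)" and "SB = OK_norm q (of_int k - real q)"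
  have "q > 0"
    using hq by auto
  then have "finite SA" "finite SB"
    by (simp_all add: SA_def SB_def finite_OK_norm)
  have "congr_pairs q (of_int k) = (SIGMA \<alpha>:SA. {\<beta> \<in> SB. congr_disc q \<alpha> \<beta>})"
    by (auto simp: congr_pairs_def SA_def SB_def)
  then have P: "card (congr_pairs q (of_int k)) = (\<Sum>\<alpha>\<in>SA. card {\<beta> \<in> SB. congr_disc q \<alpha> \<beta>})"
    using \<open>finite SA\<close> \<open>finite SB\<close> by simp
  have r: "rK q (of_int k) = card SA" "rK q (of_int k - real q) = card SB"
    by (simp_all add: rK_def SA_def SB_def OK_norm_def)
  from hq show ?thesis
  proof (cases rule: congr_disc_dichotomy[where k = k])
    case all
    then have "{\<beta> \<in> SB. congr_disc q \<alpha> \<beta>} = SB" if "\<alpha> \<in> SA" for \<alpha>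
      using that by (auto simp: SA_def SB_def)
    then have "card (congr_pairs q (of_int k)) = card SA * card SB"
      unfolding P by simp
    then show ?thesis
      by (simp add: all r)
  next
    case (half e)
    have "2 * card {\<beta> \<in> SB. congr_disc q \<alpha> \<beta>} = card SB" if "\<alpha> \<in> SA" for \<alpha>
    proof (rule two_card_filter_eq_card[OF \<open>finite SB\<close>])
      show "bij_betw ((*) e) SB SB"
        unfolding SB_def by (rule bij_betw_mult_unit[OF hq half(2)])
      show "congr_disc q \<alpha> (e * \<beta>) \<longleftrightarrow> \<not> congr_disc q \<alpha> \<beta>" if "\<beta> \<in> SB" for \<beta>
        using half(3) \<open>\<alpha> \<in> SA\<close> that by (simp add: SA_def SB_def)
    qed
    then have "2 * card (congr_pairs q (of_int k)) = card SA * card SB"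
      unfolding P sum_distrib_left by simp
    then have "2 * real (card (congr_pairs q (of_int k))) = real (card SA) * real (card SB)"
      by (metis of_nat_mult of_nat_numeral)
    then show ?thesis
      by (simp add: half(1) r)
  qed
qed

lemma card_Lset:
  assumes hq: "q \<in> class_number_one" and n: "n \<in> Nset q"
  shows "real (card (Lset q n)) = 2 * cn q n / real (card (unitsK q))
    * real (rK q (n + 2 * (lam q)^2)) * real (rK q (n - 2 * (lam q)^2))"
proof -
  obtain a b c d where det: "a * d - b * c = 1" and "n = Rg q a b c d"
    using n by (auto simp: Nset_def)
  then have "normK (mat_alpha q a b c d) = n + 2 * (lam q)^2"
    using hq normK_mat_alpha_beta(1)[OF _ det] by auto
  then obtain k where k: "n + 2 * (lam q)^2 = of_int k"
    using normK_OK_int[OF hq mat_alpha_in_OK[OF hq]] by metis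
  then have "of_int k - real q / 2 = n" "of_int k - real q = n - 2 * (lam q)^2"
    by (simp_all add: lam_squared)
  then have "real (card (unitsK q)) * real (card (Lset q n))
      = 2 * cn q n * real (rK q (n + 2 * (lam q)^2)) * real (rK q (n - 2 * (lam q)^2))"
    using card_congr_pairs[OF hq, of k] card_congr_pairs_eq_card_Lset[OF hq n] k
    by (metis of_nat_mult)
  then show ?thesis
    using card_unitsK_pos[OF hq] by (simp add: field_simps)
qed

theorem lemma2p4:
  fixes q :: nat and a b c d :: int
  assumes hq: "q \<in> {3, 4, 7, 8, 11, 19, 43, 67, 163}"
    and det: "a * d - b * c = 1"
  shows "(let n = Rg q a b c d;
              r = real_of_int (a + d);
              u = real_of_int b - (cmod (zq q))^2 * c - 2 * mu q * d;
              s = real_of_int (a - d) - 2 * mu q * c;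
              t = real_of_int b + (cmod (zq q))^2 * c
          in r \<in> \<int> \<and> u \<in> \<int> \<and> s \<in> \<int> \<and> t \<in> \<int>
             \<and> normK (of_real u + of_real r * zq q) = n + 2 * (lam q)^2
             \<and> normK (of_real t + of_real s * zq q) = n - 2 * (lam q)^2
             \<and> Complex (yg q a b c d) (xg q a b c d)
                 = (of_real u + of_real r * zq q) * (of_real t + of_real s * cnj (zq q)))
         \<and> (\<forall>n \<in> Nset q. real (card (Lset q n))
               = 2 * cn q n / real (card (unitsK q))
                 * real (rK q (n + 2 * (lam q)^2)) * real (rK q (n - 2 * (lam q)^2)))"
  using xg_yg_factorisation[OF hq det] card_Lset[OF hq] by blast

end
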